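(* Let $m\ge2$ and $\mathfrak p\ge1$ be integers, and let $\zeta$ act on $2\pi$-periodic paths by $\zeta x(\tau)=x(\tau-2\pi/(m\mathfrak p))$, generating an action of $\mathbb Z_{m\mathfrak p}$. (a) (Comet.) Let $\mathfrak q\ge1$ be an integer, $\omega=\mathfrak p/\mathfrak q$, $\nu=1/\mathfrak q$, $\varepsilon>0$, $x_j(\tau)=e^{-J\omega\tau/\nu}q_j(\tau/\nu)$, and $\mathcal H(x)=\int_0^{2\pi}\sum_{j=1}^n m_j[\phi_\alpha(\|x(\tau)-\varepsilon x_j(\tau)\|)-\phi_\alpha(\|x(\tau)\|)]d\tau$. If there is a permutation $\sigma$ of $\{1,\dots,n\}$ with $m_j=m_{\sigma(j)}$ and $q_j(t+2\pi\mathfrak q/(m\mathfrak p))=e^{2\pi J/m}q_{\sigma(j)}(t)$ for all $t$ and $j=1,\dots,n$, then $\mathcal H(\zeta x)=\mathcal H(x)$ for all $x$. (b) (Moon.) Let $m_1=1$, $q_j(t)=e^{tJ}a_j$ with $a_j=\sum_{k\ne j}m_k\frac{a_j-a_k}{\|a_j-a_k\|^{\alpha+1}}$, let $\omega>1$, $\nu=(\omega-1)/\mathfrak p$, $\varepsilon>0$, $x_j(\tau)=e^{-J\omega\tau/\nu}q_j(\tau/\nu)$, $y_j=x_1-x_j$, and $\mathcal H(x)=\int_0^{2\pi}h(x(\tau),\tau)d\tau$ with $h(x,\tau)=\varepsilon^{\alpha-1}\sum_{j=2}^n m_j[\phi_\alpha(\|y_j(\tau)+\varepsilon x\|)+\frac{y_j(\tau)}{\|y_j(\tau)\|^{\alpha+1}}\cdot\varepsilon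 x]$ for $\alpha>1$ and $h(x,\tau)=\sum_{j=2}^n m_j[-\log\frac{\|y_j(\tau)+\varepsilon x\|}{\|y_j(\tau)\|}+\frac{y_j(\tau)}{\|y_j(\tau)\|^2}\cdot\varepsilon x]$ for $\alpha=1$. If there is a permutation $\sigma$ of $\{1,\dots,n\}$ with $\sigma(1)=1$, $a_1=0$, and $m_j=m_{\sigma(j)}$, $a_j=e^{2\pi J/m}a_{\sigma(j)}$ for $j=2,\dots,n$, then $\mathcal H(\zeta x)=\mathcal H(x)$ for all $x$.
   Context: $n\ge2$, $\alpha\ge1$, masses $m_1,\dots,m_n>0$. In (a), $q_1,\dots,q_n$ is a collision-free $2\pi$-periodic solution of the $n$-body problem $\ddot q_j=-\sum_{k\ne j}m_k\frac{q_j-q_k}{\|q_j-q_k\|^{\alpha+1}}$ with $\sum_jm_jq_j=0$ and $\sum_jm_j=1$. $\phi_\alpha(\lambda)=\frac1{\alpha-1}\lambda^{1-\alpha}$ for $\alpha>1$, $\phi_1(\lambda)=-\log\lambda$. $J=\begin{pmatrix}0&1\\-1&0\end{pmatrix}$, $e^{J\theta}=\cos\theta\,I+\sin\theta\,J$. The paths $x$ range over $2\pi$-periodic $H^1$ paths for which the integrands are defined (no collisions). *)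

theory Defs
  imports "HOL-Analysis.Analysis"
begin

definition Jmat :: "real^2^2" where
  "Jmat = vector [vector [0, 1], vector [-1, 0]]"

definition expJ :: "real \<Rightarrow> real^2^2" where
  "expJ \<theta> = cos \<theta> *\<^sub>R mat 1 + sin \<theta> *\<^sub>R Jmat"

definition phi :: "real \<Rightarrow> real \<Rightarrow> real" where
  "phi \<alpha> r = (if \<alpha> = 1 then - ln r else (1 / (\<alpha> - 1)) * r powr (1 - \<alpha>))"

definition nbody_periodic_solution ::
  "nat \<Rightarrow> (nat \<Rightarrow> real) \<Rightarrow> real \<Rightarrow> (nat \<Rightarrow> real \<Rightarrow> real^2) \<Rightarrow> bool" where
  "nbody_periodic_solution n m \<alpha> q \<longleftrightarrow>
     (\<forall>j\<in>{1..n}. \<forall>t. q j (t + 2 * pi) = q j t) \<and>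
     (\<forall>j\<in>{1..n}. \<forall>k\<in>{1..n}. \<forall>t. j \<noteq> k \<longrightarrow> q j t \<noteq> q k t) \<and>
     (\<forall>j\<in>{1..n}. \<exists>v. \<forall>t. (q j has_vector_derivative v t) (at t) \<and>
        (v has_vector_derivative
           (- (\<Sum>k\<in>{1..n} - {j}. (m k / norm (q j t - q k t) powr (\<alpha> + 1)) *\<^sub>R (q j t - q k t))))
          (at t)) \<and>
     (\<forall>t. (\<Sum>j=1..n. m j *\<^sub>R q j t) = 0) \<and>
     (\<Sum>j=1..n. m j) = 1"

definition zeta :: "nat \<Rightarrow> nat \<Rightarrow> (real \<Rightarrow> real^2) \<Rightarrow> (real \<Rightarrow> real^2)" where
  "zeta mm pp x = (\<lambda>\<tau>. x (\<tau> - 2 * pi / (real mm * real pp)))"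

text \<open>2pi-periodic H^1 paths: periodic, and absolutely continuous on [0,2pi]
  with a square integrable derivative g.\<close>
definition H1_periodic :: "(real \<Rightarrow> real^2) \<Rightarrow> bool" where
  "H1_periodic x \<longleftrightarrow> (\<forall>t. x (t + 2 * pi) = x t) \<and>
     (\<exists>g. g absolutely_integrable_on {0..2*pi} \<and>
          (\<lambda>t. norm (g t) ^ 2) integrable_on {0..2*pi} \<and>
          (\<forall>t\<in>{0..2*pi}. (g has_integral (x t - x 0)) {0..t}))"

definition H_comet ::
  "nat \<Rightarrow> (nat \<Rightarrow> real) \<Rightarrow> real \<Rightarrow> real \<Rightarrow> (nat \<Rightarrow> real \<Rightarrow> real^2) \<Rightarrow> (real \<Rightarrow> real^2) \<Rightarrow> real" where
  "H_comet n m \<alpha> \<epsilon> xs x =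
     integral {0..2*pi} (\<lambda>\<tau>. \<Sum>j=1..n. m j * (phi \<alpha> (norm (x \<tau> - \<epsilon> *\<^sub>R xs j \<tau>)) - phi \<alpha> (norm (x \<tau>))))"

text \<open>Moon integrand h (b), y_j = x_1 - x_j passed as ys.\<close>
definition h_moon ::
  "nat \<Rightarrow> (nat \<Rightarrow> real) \<Rightarrow> real \<Rightarrow> real \<Rightarrow> (nat \<Rightarrow> real \<Rightarrow> real^2) \<Rightarrow> real^2 \<Rightarrow> real \<Rightarrow> real" where
  "h_moon n m \<alpha> \<epsilon> ys x \<tau> =
     (if \<alpha> > 1 then
        \<epsilon> powr (\<alpha> - 1) * (\<Sum>j=2..n. m j * (phi \<alpha> (norm (ys j \<tau> + \<epsilon> *\<^sub>R x))
            + ((1 / norm (ys j \<tau>) powr (\<alpha> + 1)) *\<^sub>R ys j \<tau>) \<bullet> (\<epsilon> *\<^sub>R x)))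
      else
        (\<Sum>j=2..n. m j * (- ln (norm (ys j \<tau> + \<epsilon> *\<^sub>R x) / norm (ys j \<tau>))
            + ((1 / norm (ys j \<tau>) ^ 2) *\<^sub>R ys j \<tau>) \<bullet> (\<epsilon> *\<^sub>R x))))"

definition H_moon ::
  "nat \<Rightarrow> (nat \<Rightarrow> real) \<Rightarrow> real \<Rightarrow> real \<Rightarrow> (nat \<Rightarrow> real \<Rightarrow> real^2) \<Rightarrow> (real \<Rightarrow> real^2) \<Rightarrow> real" where
  "H_moon n m \<alpha> \<epsilon> ys x = integral {0..2*pi} (\<lambda>\<tau>. h_moon n m \<alpha> \<epsilon> ys (x \<tau>) \<tau>)"

end

theory Submission
  imports Defs
begin

text \<open>In the rotating frame body \<open>j\<close> sits at \<open>expJ (-pp \<tau>) r\<^sub>j(\<tau>)\<close> with \<open>r\<^sub>j\<close>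
  \<open>2\<pi>\<close>-periodic: \<open>r\<^sub>j(\<tau>) = q\<^sub>j(qq \<tau>)\<close> for the comet, \<open>r\<^sub>j = a\<^sub>1 - a\<^sub>j\<close> for the moon.
  The symmetry hypothesis says that advancing \<open>\<tau>\<close> by \<open>s = 2\<pi>/(mm pp)\<close> turns \<open>r\<^sub>j\<close> into
  \<open>r\<^bsub>\<sigma> j\<^esub>\<close> rotated by \<open>2\<pi>/mm\<close>, which the additional frame rotation by \<open>-pp s = -2\<pi>/mm\<close>
  undoes. So the shift by \<open>s\<close> merely permutes bodies of equal mass: the integrand
  \<open>h(x, \<tau>)\<close> is \<open>s\<close>-periodic in \<open>\<tau>\<close> as well as \<open>2\<pi>\<close>-periodic, and replacing \<open>x\<close> by
  \<open>zeta x = x(\<cdot> - s)\<close> just translates the variable of integration within a period.\<close>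

lemma expJ_mult_vector_1: "(expJ t *v v) $ 1 = cos t * v $ 1 + sin t * v $ 2"
  by (simp add: expJ_def Jmat_def matrix_vector_mult_def sum_2 mat_def)

lemma expJ_mult_vector_2: "(expJ t *v v) $ 2 = - sin t * v $ 1 + cos t * v $ 2"
  by (simp add: expJ_def Jmat_def matrix_vector_mult_def sum_2 mat_def)

lemma expJ_add_vector: "expJ a *v (expJ b *v v) = expJ (a + b) *v v"
  by (simp add: vec_eq_iff forall_2 expJ_mult_vector_1 expJ_mult_vector_2
      cos_add sin_add algebra_simps)

lemma expJ_add_2pi_int: "expJ (t + 2 * pi * of_int k) = expJ t"
  by (simp add: expJ_def cos_add sin_add)

lemma expJ_rotating_frame_shift:
  assumes "c \<noteq> 0"
  shows "expJ (- (c * (t + \<theta> / c))) *v (expJ \<theta> *v v) = expJ (- (c * t)) *v v"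
  using assms by (simp add: expJ_add_vector distrib_left)

lemma periodic_add_nat_multiple:
  assumes "\<forall>t. f (t + p) = f t"
  shows "f (t + real k * p) = f t"
proof (induction k)
  case (Suc k)
  have "f (t + real (Suc k) * p) = f ((t + real k * p) + p)"
    by (simp add: algebra_simps)
  with assms Suc show ?case by simp
qed simp

lemma periodic_shift_has_integral:
  fixes f :: "real \<Rightarrow> 'a::banach"
  assumes per: "\<forall>t. f (t + p) = f t" and "0 \<le> s" "s \<le> p"
    and f: "(f has_integral I) {0..p}"
  shows "((\<lambda>t. f (t - s)) has_integral I) {0..p}"
proof -
  have "f integrable_on {0..p-s}" "f integrable_on {p-s..p}"
    using f assms(2,3) by (auto intro: integrable_subinterval_real)
  then obtain I1 I2 where I1: "(f has_integral I1) {0..p-s}" and I2: "(f has_integral I2) {p-s..p}"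
    by blast
  have "I = I1 + I2"
    using assms(2,3) has_integral_unique[OF f has_integral_combine[OF _ _ I1 I2]] by simp
  have "f (t + (p - s)) = f (t - s)" for t
    using per[rule_format, of "t - s"] by (metis add_diff_eq diff_add_eq)
  then have "((\<lambda>t. f (t - s)) has_integral I2) {0..s}"
    using has_integral_shift_real_ivl[OF I2, of "p - s"] by simp
  moreover have "((\<lambda>t. f (t - s)) has_integral I1) {s..p}"
    using has_integral_shift_real_ivl[OF I1, of "- s"] by simp
  ultimately have "((\<lambda>t. f (t - s)) has_integral I2 + I1) {0..p}"
    using has_integral_combine[OF assms(2,3)] by blast
  with \<open>I = I1 + I2\<close> show ?thesis
    by (simp add: add.commute)
qed

text \<open>No integrability hypothesis is needed: the shifted function is integrable iff \<open>f\<close> is,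
  since shifting it back by \<open>p - s\<close> recovers \<open>f\<close>.\<close>

lemma periodic_shift_integral:
  fixes f :: "real \<Rightarrow> 'a::banach"
  assumes per: "\<forall>t. f (t + p) = f t" and "0 \<le> s" "s \<le> p"
  shows "integral {0..p} (\<lambda>t. f (t - s)) = integral {0..p} f"
proof -
  define g where "g = (\<lambda>t. f (t - s))"
  have "g (t + p) = g t" for t
    using per[rule_format, of "t - s"] by (simp add: g_def diff_add_eq)
  then have g_per: "\<forall>t. g (t + p) = g t" ..
  have "(g has_integral I) {0..p} \<longleftrightarrow> (f has_integral I) {0..p}" for I
  proof
    assume "(g has_integral I) {0..p}"
    then have "((\<lambda>t. g (t - (p - s))) has_integral I) {0..p}"
      using periodic_shift_has_integral[OF g_per] assms(2,3) by simp
    moreover have "g (t - (p - s)) = f t" for t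
      using per[rule_format, of "t - p"] by (simp add: g_def)
    ultimately show "(f has_integral I) {0..p}"
      by simp
  qed (simp add: g_def periodic_shift_has_integral[OF per assms(2,3)])
  then show ?thesis
    by (simp add: integral_def integrable_on_def g_def)
qed

lemma integral_shifted_path:
  fixes F :: "'a \<Rightarrow> real \<Rightarrow> 'b::banach"
  assumes "\<forall>t. x (t + p) = x t" and "\<forall>v t. F v (t + p) = F v t" and "\<forall>v t. F v (t + s) = F v t"
    and "0 \<le> s" "s \<le> p"
  shows "integral {0..p} (\<lambda>t. F (x (t - s)) t) = integral {0..p} (\<lambda>t. F (x t) t)"
proof -
  have "F (x (t - s)) t = F (x (t - s)) (t - s)" for t
    using assms(3) by (metis diff_add_cancel)
  moreover have "\<forall>t. F (x (t + p)) (t + p) = F (x t) t"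
    using assms(1,2) by simp
  ultimately show ?thesis
    using periodic_shift_integral[of "\<lambda>t. F (x t) t" p s] assms(4,5) by simp
qed

lemma integral_zeta_eq:
  fixes F :: "real^2 \<Rightarrow> real \<Rightarrow> 'b::banach"
  assumes "mm \<ge> 1" "pp \<ge> 1" and "\<forall>t. x (t + 2 * pi) = x t"
    and "\<forall>v t. F v (t + 2 * pi) = F v t" and "\<forall>v t. F v (t + 2 * pi / (real mm * real pp)) = F v t"
  shows "integral {0..2 * pi} (\<lambda>\<tau>. F (zeta mm pp x \<tau>) \<tau>) = integral {0..2 * pi} (\<lambda>\<tau>. F (x \<tau>) \<tau>)"
proof -
  have "1 \<le> real mm * real pp"
    using assms(1,2) by (metis mult_mono of_nat_0_le_iff of_nat_1 of_nat_mono mult_1)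
  then have "2 * pi / (real mm * real pp) \<le> 2 * pi"
    by (simp add: divide_le_eq mult_le_cancel_left1)
  then show ?thesis
    unfolding zeta_def by (intro integral_shifted_path assms(3-5)) simp_all
qed

lemma sum_permute_weighted:
  fixes w :: "'a \<Rightarrow> 'c::semiring_0"
  assumes "\<sigma> permutes S" and "\<forall>j\<in>S. w j = w (\<sigma> j) \<and> Y j = Z (\<sigma> j)"
  shows "(\<Sum>j\<in>S. w j * G (Y j)) = (\<Sum>j\<in>S. w j * G (Z j))"
proof -
  have "(\<Sum>j\<in>S. w j * G (Y j)) = (\<Sum>j\<in>S. ((\<lambda>k. w k * G (Z k)) \<circ> \<sigma>) j)"
    using assms(2) by (intro sum.cong) auto
  also have "\<dots> = (\<Sum>j\<in>S. w j * G (Z j))"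
    using sum.permute[OF assms(1), of "\<lambda>k. w k * G (Z k)"] by simp
  finally show ?thesis .
qed

lemma H_comet_zeta_invariant:
  fixes q :: "nat \<Rightarrow> real \<Rightarrow> real^2"
  assumes "mm \<ge> 1" "pp \<ge> 1"
    and q_periodic: "\<forall>j\<in>{1..n}. \<forall>t. q j (t + 2 * pi) = q j t"
    and \<sigma>: "\<sigma> permutes {1..n}"
    and sym: "\<forall>j\<in>{1..n}. m j = m (\<sigma> j) \<and>
      (\<forall>t. q j (t + 2 * pi * real qq / (real mm * real pp)) = expJ (2 * pi / real mm) *v q (\<sigma> j) t)"
    and x_periodic: "\<forall>t. x (t + 2 * pi) = x t"
  defines "xs \<equiv> \<lambda>j \<tau>. expJ (- (real pp * \<tau>)) *v q j (real qq * \<tau>)"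
  shows "H_comet n m \<alpha> \<epsilon> xs (zeta mm pp x) = H_comet n m \<alpha> \<epsilon> xs x"
proof -
  define s where "s = 2 * pi / (real mm * real pp)"
  define F where "F v \<tau> = (\<Sum>j=1..n. m j * (phi \<alpha> (norm (v - \<epsilon> *\<^sub>R xs j \<tau>)) - phi \<alpha> (norm v)))"
    for v \<tau>
  have xs_periodic: "xs j (\<tau> + 2 * pi) = xs j \<tau>" if "j \<in> {1..n}" for j \<tau>
  proof -
    have "q j (real qq * \<tau> + real qq * (2 * pi)) = q j (real qq * \<tau>)"
      using periodic_add_nat_multiple q_periodic that by blast
    moreover have "expJ (- (real pp * (\<tau> + 2 * pi))) = expJ (- (real pp * \<tau>))"
      using expJ_add_2pi_int[of "- (real pp * \<tau>)" "- int pp"] by (simp add: algebra_simps)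
    ultimately show ?thesis
      by (simp add: xs_def distrib_left)
  qed
  have xs_shift: "xs j (\<tau> + s) = xs (\<sigma> j) \<tau>" if "j \<in> {1..n}" for j \<tau>
  proof -
    have "real qq * (\<tau> + s) = real qq * \<tau> + 2 * pi * real qq / (real mm * real pp)"
      by (simp add: s_def distrib_left)
    moreover have "s = (2 * pi / real mm) / real pp"
      by (simp add: s_def)
    ultimately show ?thesis
      using sym that expJ_rotating_frame_shift[of "real pp" \<tau> "2 * pi / real mm"] assms(2)
      by (simp add: xs_def)
  qed
  have "H_comet n m \<alpha> \<epsilon> xs y = integral {0..2 * pi} (\<lambda>\<tau>. F (y \<tau>) \<tau>)" for y
    by (simp only: H_comet_def F_def)
  moreover have "F v (\<tau> + s) = F v \<tau>" for v \<tau>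
    using sum_permute_weighted[OF \<sigma>, of m "\<lambda>j. xs j (\<tau> + s)" "\<lambda>j. xs j \<tau>"] sym xs_shift
    by (simp add: F_def)
  moreover have "F v (\<tau> + 2 * pi) = F v \<tau>" for v \<tau>
    by (simp add: F_def xs_periodic)
  ultimately show ?thesis
    using integral_zeta_eq[OF assms(1,2) x_periodic, of F] by (simp add: s_def)
qed

lemma H_moon_zeta_invariant:
  fixes b :: "nat \<Rightarrow> real^2"
  assumes "mm \<ge> 1" "pp \<ge> 1"
    and \<sigma>: "\<sigma> permutes {2..n}"
    and sym: "\<forall>j\<in>{2..n}. m j = m (\<sigma> j) \<and> b j = expJ (2 * pi / real mm) *v b (\<sigma> j)"
    and x_periodic: "\<forall>t. x (t + 2 * pi) = x t"
  defines "ys \<equiv> \<lambda>j \<tau>. expJ (- (real pp * \<tau>)) *v b j"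
  shows "H_moon n m \<alpha> \<epsilon> ys (zeta mm pp x) = H_moon n m \<alpha> \<epsilon> ys x"
proof -
  define s where "s = 2 * pi / (real mm * real pp)"
  have ys_periodic: "ys j (\<tau> + 2 * pi) = ys j \<tau>" for j \<tau>
  proof -
    have "expJ (- (real pp * (\<tau> + 2 * pi))) = expJ (- (real pp * \<tau>))"
      using expJ_add_2pi_int[of "- (real pp * \<tau>)" "- int pp"] by (simp add: algebra_simps)
    then show ?thesis
      by (simp add: ys_def)
  qed
  have ys_shift: "\<forall>j\<in>{2..n}. m j = m (\<sigma> j) \<and> ys j (\<tau> + s) = ys (\<sigma> j) \<tau>" for \<tau>
  proof -
    have "s = (2 * pi / real mm) / real pp"
      by (simp add: s_def)
    then show ?thesis
      using sym expJ_rotating_frame_shift[of "real pp" \<tau> "2 * pi / real mm"] assms(2)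
      by (simp add: ys_def)
  qed
  have "h_moon n m \<alpha> \<epsilon> ys v (\<tau> + s) = h_moon n m \<alpha> \<epsilon> ys v \<tau>" for v \<tau>
    using sum_permute_weighted[OF \<sigma> ys_shift, of "\<lambda>y. phi \<alpha> (norm (y + \<epsilon> *\<^sub>R v))
        + ((1 / norm y powr (\<alpha> + 1)) *\<^sub>R y) \<bullet> (\<epsilon> *\<^sub>R v)"]
      sum_permute_weighted[OF \<sigma> ys_shift, of "\<lambda>y. - ln (norm (y + \<epsilon> *\<^sub>R v) / norm y)
        + ((1 / norm y ^ 2) *\<^sub>R y) \<bullet> (\<epsilon> *\<^sub>R v)"]
    by (simp only: h_moon_def)
  moreover have "h_moon n m \<alpha> \<epsilon> ys v (\<tau> + 2 * pi) = h_moon n m \<alpha> \<epsilon> ys v \<tau>" for v \<tau>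
    by (simp only: h_moon_def ys_periodic)
  ultimately show ?thesis
    unfolding H_moon_def using integral_zeta_eq[OF assms(1,2) x_periodic, of "h_moon n m \<alpha> \<epsilon> ys"]
    by (simp add: s_def)
qed

theorem lemma2:
  fixes n mm pp :: nat and \<alpha> :: real and m :: "nat \<Rightarrow> real"
  assumes "n \<ge> 2" and "\<alpha> \<ge> 1" and "\<forall>j\<in>{1..n}. m j > 0"
    and "mm \<ge> 2" and "pp \<ge> 1"
  shows
    "(\<forall>(q :: nat \<Rightarrow> real \<Rightarrow> real^2) (qq :: nat) (\<epsilon> :: real) (\<sigma> :: nat \<Rightarrow> nat).
        nbody_periodic_solution n m \<alpha> q \<and> qq \<ge> 1 \<and> \<epsilon> > 0 \<and>
        \<sigma> permutes {1..n} \<and>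
        (\<forall>j\<in>{1..n}. m j = m (\<sigma> j) \<and>
           (\<forall>t. q j (t + 2 * pi * real qq / (real mm * real pp)) = expJ (2 * pi / real mm) *v q (\<sigma> j) t))
        \<longrightarrow>
        (let \<omega> = real pp / real qq; \<nu> = 1 / real qq;
             xs = (\<lambda>j \<tau>. expJ (- (\<omega> * \<tau> / \<nu>)) *v q j (\<tau> / \<nu>))
         in \<forall>x. H1_periodic x \<and> (\<forall>\<tau>. x \<tau> \<noteq> 0 \<and> (\<forall>j\<in>{1..n}. x \<tau> \<noteq> \<epsilon> *\<^sub>R xs j \<tau>)) \<longrightarrow>
              H_comet n m \<alpha> \<epsilon> xs (zeta mm pp x) = H_comet n m \<alpha> \<epsilon> xs x)) \<and>
     (\<forall>(a :: nat \<Rightarrow> real^2) (\<omega> :: real) (\<epsilon> :: real) (\<sigma> :: nat \<Rightarrow> nat).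
        m 1 = 1 \<and>
        (\<forall>j\<in>{1..n}. \<forall>k\<in>{1..n}. j \<noteq> k \<longrightarrow> a j \<noteq> a k) \<and>
        (\<forall>j\<in>{1..n}. a j = (\<Sum>k\<in>{1..n} - {j}. (m k / norm (a j - a k) powr (\<alpha> + 1)) *\<^sub>R (a j - a k))) \<and>
        \<omega> > 1 \<and> \<epsilon> > 0 \<and>
        \<sigma> permutes {1..n} \<and> \<sigma> 1 = 1 \<and> a 1 = 0 \<and>
        (\<forall>j\<in>{2..n}. m j = m (\<sigma> j) \<and> a j = expJ (2 * pi / real mm) *v a (\<sigma> j))
        \<longrightarrow>
        (let q = (\<lambda>j t. expJ t *v a j); \<nu> = (\<omega> - 1) / real pp;
             xs = (\<lambda>j \<tau>. expJ (- (\<omega> * \<tau> / \<nu>)) *v q j (\<tau> / \<nu>));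
             ys = (\<lambda>j \<tau>. xs 1 \<tau> - xs j \<tau>)
         in \<forall>x. H1_periodic x \<and> (\<forall>\<tau>. \<forall>j\<in>{2..n}. ys j \<tau> + \<epsilon> *\<^sub>R x \<tau> \<noteq> 0) \<longrightarrow>
              H_moon n m \<alpha> \<epsilon> ys (zeta mm pp x) = H_moon n m \<alpha> \<epsilon> ys x))"
proof (intro conjI allI impI, goal_cases comet moon)
  case (comet q qq \<epsilon> \<sigma>)
  then have q_periodic: "\<forall>j\<in>{1..n}. \<forall>t. q j (t + 2 * pi) = q j t"
    by (simp add: nbody_periodic_solution_def)
  have xs_eq: "(\<lambda>j \<tau>. expJ (- (real pp / real qq * \<tau> / (1 / real qq))) *v q j (\<tau> / (1 / real qq)))
      = (\<lambda>j \<tau>. expJ (- (real pp * \<tau>)) *v q j (real qq * \<tau>))"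
    using comet by (simp add: mult.commute)
  show ?case
    unfolding Let_def xs_eq H1_periodic_def
    using H_comet_zeta_invariant[OF _ _ q_periodic] comet assms(4,5) by auto
next
  case (moon a \<omega> \<epsilon> \<sigma>)
  have "\<omega> > 1" and "\<sigma> permutes {1..n}" and "\<sigma> 1 = 1" and "a 1 = 0"
    and sym: "\<forall>j\<in>{2..n}. m j = m (\<sigma> j) \<and> a j = expJ (2 * pi / real mm) *v a (\<sigma> j)"
    using moon by blast+
  have frame: "expJ (- (\<omega> * \<tau> / ((\<omega> - 1) / real pp))) *v (expJ (\<tau> / ((\<omega> - 1) / real pp)) *v v)
      = expJ (- (real pp * \<tau>)) *v v" for \<tau> v
  proof -
    have "- (\<omega> * \<tau> / ((\<omega> - 1) / real pp)) + \<tau> / ((\<omega> - 1) / real pp)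
        = - ((\<omega> - 1) * \<tau> / ((\<omega> - 1) / real pp))"
      by (simp add: left_diff_distrib diff_divide_distrib)
    also have "\<dots> = - (real pp * \<tau>)"
      using \<open>\<omega> > 1\<close> assms(5) by simp
    finally show ?thesis
      by (simp add: expJ_add_vector)
  qed
  have \<sigma>: "\<sigma> permutes {2..n}"
    by (rule permutes_superset[OF \<open>\<sigma> permutes {1..n}\<close>]) (use \<open>\<sigma> 1 = 1\<close> le_antisym not_less_eq_eq in fastforce)
  have b_sym: "\<forall>j\<in>{2..n}. m j = m (\<sigma> j) \<and> a 1 - a j = expJ (2 * pi / real mm) *v (a 1 - a (\<sigma> j))"
    using sym \<open>a 1 = 0\<close> by (simp add: linear_neg[OF matrix_vector_mul_linear])
  show ?case
    unfolding Let_def frame H1_periodic_def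
    using H_moon_zeta_invariant[OF _ _ \<sigma> b_sym] assms(4,5)
    by (simp add: matrix_vector_mult_diff_distrib[symmetric])
qed

end
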